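(* Let $\bm{L}\in\mathbb{R}^{m\times n}$ have rank $r$ and compact SVD $\bm{L}=\bm{W}_{\bm{L}}\bm{\Sigma}_{\bm{L}}\bm{V}_{\bm{L}}^T$, and suppose $\max_{i}\|\bm{W}_{\bm{L}}^T\bm{e}_i\|_2\leq\sqrt{\mu_1(\bm{L}) r/m}$ and $\max_{i}\|\bm{V}_{\bm{L}}^T\bm{e}_i\|_2\leq\sqrt{\mu_2(\bm{L}) r/n}$. Then for any $J\subseteq[n]$, the matrix $\bm{C}=\bm{L}(:,J)$, with compact SVD $\bm{C}=\bm{W}_{\bm{C}}\bm{\Sigma}_{\bm{C}}\bm{V}_{\bm{C}}^T$, satisfies \[\max_i\|\bm{V}_{\bm{C}}^T\bm{e}_i\|_2\leq\kappa(\bm{L})\,\frac{\|\bm{C}^\dagger\|_2}{\|\bm{L}^\dagger\|_2}\sqrt{\frac{\mu_2(\bm{L}) r}{n}}.\]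
   Context: $[n]=\{1,\dots,n\}$; $\bm{L}(:,J)$ is the column submatrix with column indices in $J$; $\bm{A}^\dagger$ is the Moore–Penrose pseudoinverse; $\kappa(\bm{A})=\|\bm{A}\|_2\|\bm{A}^\dagger\|_2=\sigma_{\max}(\bm{A})/\sigma_{\min}(\bm{A})$ with $\sigma_{\min}$ the smallest nonzero singular value. *)

theory Defs
  imports Main "HOL.Real" "Jordan_Normal_Form.DL_Rank" "Jordan_Normal_Form.DL_Submatrix"
begin

definition vnorm2 :: "real vec \<Rightarrow> real" where
  "vnorm2 v = sqrt (\<Sum>i<dim_vec v. (v $ i)^2)"

definition opnorm2 :: "real mat \<Rightarrow> real" where
  "opnorm2 A = Sup {vnorm2 (A *\<^sub>v x) | x. x \<in> carrier_vec (dim_col A) \<and> vnorm2 x \<le> 1}"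

definition pinv :: "real mat \<Rightarrow> real mat" where
  "pinv A = (THE X. X \<in> carrier_mat (dim_col A) (dim_row A) \<and>
      A * X * A = A \<and> X * A * X = X \<and>
      transpose_mat (A * X) = A * X \<and> transpose_mat (X * A) = X * A)"

definition kappa :: "real mat \<Rightarrow> real" where
  "kappa A = opnorm2 A * opnorm2 (pinv A)"

definition mrank :: "real mat \<Rightarrow> nat" where
  "mrank A = vec_space.rank (dim_row A) A"

definition compact_svd :: "real mat \<Rightarrow> real mat \<Rightarrow> real mat \<Rightarrow> real mat \<Rightarrow> nat \<Rightarrow> bool" where
  "compact_svd A W S V k \<longleftrightarrow>
     W \<in> carrier_mat (dim_row A) k \<and> S \<in> carrier_mat k k \<and> V \<in> carrier_mat (dim_col A) k \<and>
     transpose_mat W * W = 1\<^sub>m k \<and> transpose_mat V * V = 1\<^sub>m k \<and>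
     (\<forall>i<k. \<forall>j<k. i \<noteq> j \<longrightarrow> S $$ (i,j) = 0) \<and> (\<forall>i<k. S $$ (i,i) > 0) \<and>
     A = W * S * transpose_mat V"

end

theory Submission
  imports Defs "HOL-Analysis.L2_Norm"
begin

(* For a compact SVD A = W S V^T one has A^+ A = V V^T and A = A V V^T. Hence the j-th row of V
   has norm |V V^T e_j| = |A^+ A e_j| <= |A^+| |A e_j|, while
   |A e_j| = |A V V^T e_j| <= |A| |V^T e_j|.
   Applying the first bound to C = L(:,J) and the second to L (the i-th column of C is a column
   e_j of L) gives |V_C^T e_i| <= |C^+| |L| |V_L^T e_j|, and |L| = kappa(L) / |L^+|. *)

lemma vnorm2_nonneg: "0 \<le> vnorm2 v"
  by (simp add: vnorm2_def sum_nonneg)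

lemma vnorm2_eq_sqrt_scalar_prod: "vnorm2 v = sqrt (v \<bullet> v)"
  by (simp add: vnorm2_def scalar_prod_def power2_eq_square lessThan_atLeast0)

lemma abs_index_le_vnorm2: "i < dim_vec v \<Longrightarrow> \<bar>v $ i\<bar> \<le> vnorm2 v"
proof -
  assume i: "i < dim_vec v"
  have "(v $ i)\<^sup>2 \<le> (\<Sum>j<dim_vec v. (v $ j)\<^sup>2)"
    using i by (intro member_le_sum) auto
  then show ?thesis unfolding vnorm2_def by (metis real_sqrt_abs real_sqrt_le_mono)
qed

lemma vnorm2_le_sum_abs: "vnorm2 v \<le> (\<Sum>i<dim_vec v. \<bar>v $ i\<bar>)"
  using L2_set_le_sum_abs[of "\<lambda>i. v $ i"] by (simp add: vnorm2_def L2_set_def)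

lemma vnorm2_smult: "vnorm2 (c \<cdot>\<^sub>v v) = \<bar>c\<bar> * vnorm2 v"
  by (simp add: vnorm2_def power_mult_distrib sum_distrib_left[symmetric] real_sqrt_mult)

lemma vnorm2_eq_0_imp_zero_vec: "vnorm2 v = 0 \<Longrightarrow> v = 0\<^sub>v (dim_vec v)"
  using abs_index_le_vnorm2[of _ v] by (intro eq_vecI) force+

lemma vnorm2_mult_isometry:
  assumes V: "V \<in> carrier_mat n k" and VV: "transpose_mat V * V = 1\<^sub>m k" and y: "y \<in> carrier_vec k"
  shows "vnorm2 (V *\<^sub>v y) = vnorm2 y"
proof -
  have "(V *\<^sub>v y) \<bullet> (V *\<^sub>v y) = (transpose_mat V *\<^sub>v (V *\<^sub>v y)) \<bullet> y"
    using V y by (simp add: transpose_vec_mult_scalar)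
  also have "transpose_mat V *\<^sub>v (V *\<^sub>v y) = y"
    using V y VV by (metis assoc_mult_mat_vec one_mult_mat_vec transpose_carrier_mat)
  finally show ?thesis unfolding vnorm2_eq_sqrt_scalar_prod by simp
qed

lemma vnorm2_mult_mat_vec_le_abs_sum:
  fixes A :: "real mat"
  assumes x: "x \<in> carrier_vec (dim_col A)"
  shows "vnorm2 (A *\<^sub>v x) \<le> (\<Sum>i<dim_row A. \<Sum>j<dim_col A. \<bar>A $$ (i,j)\<bar>) * vnorm2 x"
proof -
  have "vnorm2 (A *\<^sub>v x) \<le> (\<Sum>i<dim_row A. \<bar>(A *\<^sub>v x) $ i\<bar>)"
    using vnorm2_le_sum_abs[of "A *\<^sub>v x"] by simp
  also have "\<dots> \<le> (\<Sum>i<dim_row A. \<Sum>j<dim_col A. \<bar>A $$ (i,j)\<bar> * vnorm2 x)"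
  proof (rule sum_mono)
    fix i assume i: "i \<in> {..<dim_row A}"
    have "\<bar>(A *\<^sub>v x) $ i\<bar> = \<bar>\<Sum>j<dim_col A. A $$ (i,j) * x $ j\<bar>"
      using i x by (simp add: scalar_prod_def lessThan_atLeast0)
    also have "\<dots> \<le> (\<Sum>j<dim_col A. \<bar>A $$ (i,j)\<bar> * \<bar>x $ j\<bar>)"
      by (rule order_trans[OF sum_abs]) (simp add: abs_mult)
    also have "\<dots> \<le> (\<Sum>j<dim_col A. \<bar>A $$ (i,j)\<bar> * vnorm2 x)"
      using x by (intro sum_mono mult_left_mono abs_index_le_vnorm2) auto
    finally show "\<bar>(A *\<^sub>v x) $ i\<bar> \<le> (\<Sum>j<dim_col A. \<bar>A $$ (i,j)\<bar> * vnorm2 x)" .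
  qed
  finally show ?thesis by (simp add: sum_distrib_right)
qed

lemma bdd_above_opnorm2:
  "bdd_above {vnorm2 (A *\<^sub>v x) | x. x \<in> carrier_vec (dim_col A) \<and> vnorm2 x \<le> 1}"
proof (rule bdd_aboveI, safe)
  let ?B = "\<Sum>i<dim_row A. \<Sum>j<dim_col A. \<bar>A $$ (i,j)\<bar>"
  fix x assume x: "x \<in> carrier_vec (dim_col A)" "vnorm2 x \<le> 1"
  have "vnorm2 (A *\<^sub>v x) \<le> ?B * vnorm2 x"
    using x(1) by (rule vnorm2_mult_mat_vec_le_abs_sum)
  also have "\<dots> \<le> ?B"
    using x by (intro mult_left_le sum_nonneg) (auto simp: vnorm2_nonneg)
  finally show "vnorm2 (A *\<^sub>v x) \<le> ?B" .
qed

lemma opnorm2_upper: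
  "x \<in> carrier_vec (dim_col A) \<Longrightarrow> vnorm2 x \<le> 1 \<Longrightarrow> vnorm2 (A *\<^sub>v x) \<le> opnorm2 A"
  unfolding opnorm2_def by (rule cSup_upper[OF _ bdd_above_opnorm2]) auto

lemma opnorm2_nonneg: "0 \<le> opnorm2 A"
  using opnorm2_upper[of "0\<^sub>v (dim_col A)" A] vnorm2_nonneg[of "A *\<^sub>v 0\<^sub>v (dim_col A)"]
  by (simp add: vnorm2_def)

lemma vnorm2_mult_mat_vec_le:
  assumes x: "x \<in> carrier_vec (dim_col A)"
  shows "vnorm2 (A *\<^sub>v x) \<le> opnorm2 A * vnorm2 x"
proof (cases "vnorm2 x = 0")
  case True
  then have "x = 0\<^sub>v (dim_col A)"
    using x vnorm2_eq_0_imp_zero_vec[of x] by simp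
  then have "A *\<^sub>v x = 0\<^sub>v (dim_row A)"
    by auto
  then show ?thesis using True by (simp add: vnorm2_def)
next
  case False
  then have pos: "0 < vnorm2 x" using vnorm2_nonneg[of x] by simp
  let ?c = "1 / vnorm2 x"
  have "vnorm2 (A *\<^sub>v (?c \<cdot>\<^sub>v x)) \<le> opnorm2 A"
    using x pos by (intro opnorm2_upper) (auto simp: vnorm2_smult)
  moreover have "A *\<^sub>v (?c \<cdot>\<^sub>v x) = ?c \<cdot>\<^sub>v (A *\<^sub>v x)"
    using x by (intro mult_mat_vec) auto
  ultimately show ?thesis using pos by (simp add: vnorm2_smult field_simps)
qed

lemma opnorm2_eq_0_imp_zero_mat:
  assumes A: "A \<in> carrier_mat m n" and "opnorm2 A = 0"
  shows "A = 0\<^sub>m m n"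
proof -
  have "col A j = 0\<^sub>v m" if j: "j < n" for j
  proof -
    have "col A j = A *\<^sub>v unit_vec n j"
      using col_mult2[OF A one_carrier_mat j] A j by simp
    moreover have "vnorm2 (A *\<^sub>v unit_vec n j) \<le> 0"
      using vnorm2_mult_mat_vec_le[of "unit_vec n j" A] A \<open>opnorm2 A = 0\<close> by simp
    ultimately show ?thesis
      using vnorm2_nonneg[of "col A j"] vnorm2_eq_0_imp_zero_vec[of "col A j"] A by simp
  qed
  then show ?thesis
    using A by (intro eq_matI) (auto simp flip: index_col)
qed

lemma penrose_conditions_imp_eq_mult:
  fixes A X Y :: "'a :: comm_semiring_0 mat"
  assumes A: "A \<in> carrier_mat m n" and X: "X \<in> carrier_mat n m" and Y: "Y \<in> carrier_mat n m"
    and XAX: "X * A * X = X" and AX: "transpose_mat (A * X) = A * X"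
    and AYA: "A * Y * A = A" and AY: "transpose_mat (A * Y) = A * Y"
  shows "X = X * A * Y"
proof -
  have AX': "A * X = transpose_mat X * transpose_mat A"
    using AX transpose_mult[OF A X] by simp
  have "transpose_mat A = transpose_mat (A * Y * A)"
    using AYA by simp
  also have "\<dots> = transpose_mat A * (A * Y)"
    using transpose_mult[OF mult_carrier_mat[OF A Y] A] AY by simp
  finally have tA: "transpose_mat A = transpose_mat A * (A * Y)" .
  have "X = X * (A * X)"
    using XAX X A by simp
  also have "\<dots> = X * (transpose_mat X * (transpose_mat A * (A * Y)))"
    using AX' tA by simp
  also have "\<dots> = X * ((transpose_mat X * transpose_mat A) * (A * Y))"
    using X A Y by (simp add: assoc_mult_mat[of "transpose_mat X" m n "transpose_mat A" m "A * Y" m])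
  also have "\<dots> = X * ((A * X) * (A * Y))"
    using AX' by simp
  also have "\<dots> = (X * A * X) * (A * Y)"
    using assoc_mult_mat[OF X mult_carrier_mat[OF A X] mult_carrier_mat[OF A Y]]
      assoc_mult_mat[OF X A X] by simp
  also have "\<dots> = X * A * Y"
    using XAX X A Y by simp
  finally show ?thesis .
qed

lemma transpose_mult3:
  fixes A B C :: "'a :: comm_semiring_0 mat"
  assumes "A \<in> carrier_mat a b" "B \<in> carrier_mat b c" "C \<in> carrier_mat c d"
  shows "transpose_mat (A * B * C) = transpose_mat C * transpose_mat B * transpose_mat A"
proof -
  have "transpose_mat (A * B * C) = transpose_mat C * transpose_mat (A * B)"
    using transpose_mult[OF mult_carrier_mat[OF assms(1,2)] assms(3)] .
  also have "\<dots> = transpose_mat C * (transpose_mat B * transpose_mat A)"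
    using transpose_mult[OF assms(1,2)] by simp
  finally show ?thesis
    using assms by simp
qed

lemma penrose_conditions_unique:
  fixes A X Y :: "'a :: comm_semiring_0 mat"
  assumes A: "A \<in> carrier_mat m n" and X: "X \<in> carrier_mat n m" and Y: "Y \<in> carrier_mat n m"
    and AXA: "A * X * A = A" and XAX: "X * A * X = X"
    and AX: "transpose_mat (A * X) = A * X" and XA: "transpose_mat (X * A) = X * A"
    and AYA: "A * Y * A = A" and YAY: "Y * A * Y = Y"
    and AY: "transpose_mat (A * Y) = A * Y" and YA: "transpose_mat (Y * A) = Y * A"
  shows "X = Y"
proof -
  have "transpose_mat Y = transpose_mat Y * transpose_mat A * transpose_mat X"
  proof (rule penrose_conditions_imp_eq_mult[of "transpose_mat A" n m])
    show "transpose_mat Y * transpose_mat A * transpose_mat Y = transpose_mat Y"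
      using transpose_mult3[OF Y A Y] YAY by simp
    show "transpose_mat A * transpose_mat X * transpose_mat A = transpose_mat A"
      using transpose_mult3[OF A X A] AXA by simp
    show "transpose_mat (transpose_mat A * transpose_mat Y) = transpose_mat A * transpose_mat Y"
      using transpose_mult[OF Y A] YA by simp
    show "transpose_mat (transpose_mat A * transpose_mat X) = transpose_mat A * transpose_mat X"
      using transpose_mult[OF X A] XA by simp
  qed (use A X Y in auto)
  also have "\<dots> = transpose_mat (X * A * Y)"
    using transpose_mult3[OF X A Y] by simp
  finally have "Y = X * A * Y"
    by (metis transpose_transpose)
  then show ?thesis
    using penrose_conditions_imp_eq_mult[OF A X Y XAX AX AYA AY] by simp
qed

lemma pinv_eqI:
  assumes "X \<in> carrier_mat (dim_col A) (dim_row A)"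
    and "A * X * A = A" "X * A * X = X"
    and "transpose_mat (A * X) = A * X" "transpose_mat (X * A) = X * A"
  shows "pinv A = X"
  unfolding pinv_def
proof (rule the_equality)
  fix Y assume "Y \<in> carrier_mat (dim_col A) (dim_row A) \<and> A * Y * A = A \<and> Y * A * Y = Y \<and>
      transpose_mat (A * Y) = A * Y \<and> transpose_mat (Y * A) = Y * A"
  then show "Y = X"
    using penrose_conditions_unique[OF carrier_matI[OF refl refl] assms(1)] assms by metis
qed (use assms in blast)

definition diag_inv :: "'a :: field mat \<Rightarrow> 'a mat" where
  "diag_inv S = mat_diag (dim_row S) (\<lambda>i. 1 / S $$ (i,i))"

lemma diag_inv_carrier: "S \<in> carrier_mat k k \<Longrightarrow> diag_inv S \<in> carrier_mat k k"
  by (simp add: diag_inv_def)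

lemma diag_inv_mult:
  fixes S :: "'a :: field mat"
  assumes S: "S \<in> carrier_mat k k"
    and diag: "\<forall>i<k. \<forall>j<k. i \<noteq> j \<longrightarrow> S $$ (i,j) = 0" and nz: "\<forall>i<k. S $$ (i,i) \<noteq> 0"
  shows "S * diag_inv S = 1\<^sub>m k" and "diag_inv S * S = 1\<^sub>m k"
  using S diag nz
  by (auto simp: diag_inv_def mat_diag_mult_right[OF S] mat_diag_mult_left[OF S] intro!: eq_matI)

lemma compact_svd_cancel:
  assumes svd: "compact_svd A W S V k" and Q: "Q \<in> carrier_mat k c"
  shows "transpose_mat W * (W * Q) = Q" and "transpose_mat V * (V * Q) = Q"
    and "S * (diag_inv S * Q) = Q" and "diag_inv S * (S * Q) = Q"
proof -
  have W: "W \<in> carrier_mat (dim_row A) k" and S: "S \<in> carrier_mat k k"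
    and V: "V \<in> carrier_mat (dim_col A) k"
    and WW: "transpose_mat W * W = 1\<^sub>m k" and VV: "transpose_mat V * V = 1\<^sub>m k"
    and diag: "\<forall>i<k. \<forall>j<k. i \<noteq> j \<longrightarrow> S $$ (i,j) = 0" and pos: "\<forall>i<k. 0 < S $$ (i,i)"
    using svd by (auto simp: compact_svd_def)
  have D: "diag_inv S \<in> carrier_mat k k"
    using S by (rule diag_inv_carrier)
  have SD: "S * diag_inv S = 1\<^sub>m k" and DS: "diag_inv S * S = 1\<^sub>m k"
    using diag_inv_mult[OF S diag] pos by force+
  show "transpose_mat W * (W * Q) = Q" "transpose_mat V * (V * Q) = Q"
    "S * (diag_inv S * Q) = Q" "diag_inv S * (S * Q) = Q"
    using Q assoc_mult_mat[OF _ W Q, of "transpose_mat W"] WW W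
      assoc_mult_mat[OF _ V Q, of "transpose_mat V"] VV V
      assoc_mult_mat[OF S D Q] assoc_mult_mat[OF D S Q] SD DS
    by simp_all
qed

lemma compact_svd_pinv:
  assumes svd: "compact_svd A W S V k"
  shows "pinv A = V * (diag_inv S * transpose_mat W)"
    and "pinv A * A = V * transpose_mat V"
    and "pinv A \<in> carrier_mat (dim_col A) (dim_row A)"
proof -
  define m n X where "m = dim_row A" and "n = dim_col A"
    and "X = V * (diag_inv S * transpose_mat W)"
  have W: "W \<in> carrier_mat m k" and S: "S \<in> carrier_mat k k" and V: "V \<in> carrier_mat n k"
    and A: "A = W * (S * transpose_mat V)"
    using svd by (auto simp: compact_svd_def m_def n_def)
  have Am: "A \<in> carrier_mat m n" and Wt: "transpose_mat W \<in> carrier_mat k m"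
    and Vt: "transpose_mat V \<in> carrier_mat k n" and SVt: "S * transpose_mat V \<in> carrier_mat k n"
    and DWt: "diag_inv S * transpose_mat W \<in> carrier_mat k m"
    and X: "X \<in> carrier_mat n m"
    using W V S diag_inv_carrier[OF S] by (auto simp: m_def n_def X_def)
  note cancel = compact_svd_cancel[OF svd]
  have WtA: "transpose_mat W * A = S * transpose_mat V"
    unfolding A using cancel(1)[OF SVt] .
  have VtX: "transpose_mat V * X = diag_inv S * transpose_mat W"
    unfolding X_def using cancel(2)[OF DWt] .
  have AX: "A * X = W * transpose_mat W"
    using assoc_mult_mat[OF W SVt X] assoc_mult_mat[OF S Vt X] VtX cancel(3)[OF Wt]
    by (simp add: A)
  have XA: "X * A = V * transpose_mat V"
    unfolding X_def
    using assoc_mult_mat[OF V DWt Am] assoc_mult_mat[OF diag_inv_carrier[OF S] Wt Am] WtA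
      cancel(4)[OF Vt] by simp
  have "pinv A = X"
  proof (rule pinv_eqI)
    show "X \<in> carrier_mat (dim_col A) (dim_row A)"
      using X by (simp add: m_def n_def)
    show "A * X * A = A"
      using assoc_mult_mat[OF W Wt Am] WtA by (simp add: AX A[symmetric])
    show "X * A * X = X"
      using assoc_mult_mat[OF V Vt X] VtX by (simp add: XA X_def[symmetric])
    show "transpose_mat (A * X) = A * X" "transpose_mat (X * A) = X * A"
      unfolding AX XA using transpose_mult[OF W Wt] transpose_mult[OF V Vt] by simp_all
  qed
  then show "pinv A = V * (diag_inv S * transpose_mat W)"
    unfolding X_def .
  show "pinv A * A = V * transpose_mat V"
    using \<open>pinv A = X\<close> XA by simp
  show "pinv A \<in> carrier_mat (dim_col A) (dim_row A)"
    using \<open>pinv A = X\<close> X by (simp add: m_def n_def)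
qed

lemma opnorm2_pinv_pos:
  assumes svd: "compact_svd A W S V k" and "0 < k"
  shows "0 < opnorm2 (pinv A)"
proof (rule ccontr)
  have V: "V \<in> carrier_mat (dim_col A) k" and VV: "transpose_mat V * V = 1\<^sub>m k"
    using svd by (auto simp: compact_svd_def)
  have Vt: "transpose_mat V \<in> carrier_mat k (dim_col A)"
    using V by simp
  assume "\<not> 0 < opnorm2 (pinv A)"
  then have "pinv A = 0\<^sub>m (dim_col A) (dim_row A)"
    using opnorm2_nonneg[of "pinv A"] opnorm2_eq_0_imp_zero_mat[OF compact_svd_pinv(3)[OF svd]] by simp
  then have VVt: "V * transpose_mat V = 0\<^sub>m (dim_col A) (dim_col A)"
    using compact_svd_pinv(2)[OF svd] by simp
  have "1\<^sub>m k = transpose_mat V * V * (transpose_mat V * V)"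
    using VV by simp
  also have "\<dots> = transpose_mat V * (V * transpose_mat V) * V"
    using assoc_mult_mat[OF Vt V Vt] assoc_mult_mat[OF mult_carrier_mat[OF Vt V] Vt V] by simp
  also have "\<dots> = 0\<^sub>m k k"
    using V Vt VVt by simp
  finally show False
    using \<open>0 < k\<close> by (metis index_one_mat(1) index_zero_mat(1) zero_neq_one)
qed

lemma col_mult_transpose_self:
  assumes V: "V \<in> carrier_mat n k" and j: "j < n"
  shows "col (V * transpose_mat V) j = V *\<^sub>v row V j"
proof -
  have "col (V * transpose_mat V) j = V *\<^sub>v col (transpose_mat V) j"
    using V j by (intro col_mult2) auto
  also have "col (transpose_mat V) j = row V j"
    using V j by simp
  finally show ?thesis .
qed

lemma vnorm2_row_compact_svd_le:
  assumes svd: "compact_svd A W S V k" and j: "j < dim_col A"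
  shows "vnorm2 (row V j) \<le> opnorm2 (pinv A) * vnorm2 (col A j)"
proof -
  have V: "V \<in> carrier_mat (dim_col A) k" and VV: "transpose_mat V * V = 1\<^sub>m k"
    using svd by (auto simp: compact_svd_def)
  have "vnorm2 (row V j) = vnorm2 (V *\<^sub>v row V j)"
    using vnorm2_mult_isometry[OF V VV] V j by simp
  also have "V *\<^sub>v row V j = col (pinv A * A) j"
    using col_mult_transpose_self[OF V j] by (simp only: compact_svd_pinv(2)[OF svd])
  also have "\<dots> = pinv A *\<^sub>v col A j"
    using compact_svd_pinv(3)[OF svd] j by (intro col_mult2) auto
  also have "vnorm2 (pinv A *\<^sub>v col A j) \<le> opnorm2 (pinv A) * vnorm2 (col A j)"
    using compact_svd_pinv(3)[OF svd] by (intro vnorm2_mult_mat_vec_le) simp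
  finally show ?thesis .
qed

lemma vnorm2_col_compact_svd_le:
  assumes svd: "compact_svd A W S V k" and j: "j < dim_col A"
  shows "vnorm2 (col A j) \<le> opnorm2 A * vnorm2 (row V j)"
proof -
  have W: "W \<in> carrier_mat (dim_row A) k" and S: "S \<in> carrier_mat k k"
    and V: "V \<in> carrier_mat (dim_col A) k" and VV: "transpose_mat V * V = 1\<^sub>m k"
    and A: "A = W * (S * transpose_mat V)"
    using svd by (auto simp: compact_svd_def)
  have Am: "A \<in> carrier_mat (dim_row A) (dim_col A)"
    by simp
  have Vt: "transpose_mat V \<in> carrier_mat k (dim_col A)"
    and VVt: "V * transpose_mat V \<in> carrier_mat (dim_col A) (dim_col A)"
    using V by auto
  have "transpose_mat V * (V * transpose_mat V) = transpose_mat V"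
    using assoc_mult_mat[OF Vt V Vt] V VV by simp
  then have "A * (V * transpose_mat V) = A"
    using assoc_mult_mat[OF W mult_carrier_mat[OF S Vt] VVt] assoc_mult_mat[OF S Vt VVt]
    by (subst (1 2) A) simp
  then have "col A j = col (A * (V * transpose_mat V)) j"
    by simp
  also have "\<dots> = A *\<^sub>v (V *\<^sub>v row V j)"
    using col_mult2[OF Am VVt j] col_mult_transpose_self[OF V j] by (simp only:)
  also have "vnorm2 \<dots> \<le> opnorm2 A * vnorm2 (V *\<^sub>v row V j)"
    using V j by (intro vnorm2_mult_mat_vec_le mult_mat_vec_carrier[OF V]) simp
  also have "vnorm2 (V *\<^sub>v row V j) = vnorm2 (row V j)"
    using vnorm2_mult_isometry[OF V VV] V j by simp
  finally show ?thesis
    by simp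
qed

lemma col_submatrix_UNIV:
  assumes "i < card {j. j < dim_col A \<and> j \<in> J}"
  shows "col (submatrix A UNIV J) i = col A (pick J i)"
  using assms by (intro eq_vecI) (auto simp: dim_submatrix submatrix_index pick_UNIV pick_le)

lemma vnorm2_row_submatrix_le:
  assumes svd: "compact_svd A W S V k"
    and svd_C: "compact_svd (submatrix A UNIV J) W\<^sub>C S\<^sub>C V\<^sub>C k\<^sub>C"
    and i: "i < card {j. j < dim_col A \<and> j \<in> J}"
  shows "vnorm2 (row V\<^sub>C i)
    \<le> opnorm2 (pinv (submatrix A UNIV J)) * opnorm2 A * vnorm2 (row V (pick J i))"
proof -
  have "vnorm2 (row V\<^sub>C i) \<le> opnorm2 (pinv (submatrix A UNIV J)) * vnorm2 (col A (pick J i))"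
    using vnorm2_row_compact_svd_le[OF svd_C, of i] i col_submatrix_UNIV[OF i]
    by (simp add: dim_submatrix)
  also have "\<dots> \<le> opnorm2 (pinv (submatrix A UNIV J)) * (opnorm2 A * vnorm2 (row V (pick J i)))"
    using vnorm2_col_compact_svd_le[OF svd pick_le[OF i]] by (intro mult_left_mono opnorm2_nonneg)
  finally show ?thesis
    by (simp add: mult.assoc)
qed

theorem lemma4p2:
  fixes L W\<^sub>L S\<^sub>L V\<^sub>L :: "real mat" and m n r :: nat and \<mu>\<^sub>1 \<mu>\<^sub>2 :: real and J :: "nat set"
  assumes "L \<in> carrier_mat m n"
    and "mrank L = r"
    and "compact_svd L W\<^sub>L S\<^sub>L V\<^sub>L r"
    and "\<forall>i<m. vnorm2 (row W\<^sub>L i) \<le> sqrt (\<mu>\<^sub>1 * r / m)"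
    and "\<forall>i<n. vnorm2 (row V\<^sub>L i) \<le> sqrt (\<mu>\<^sub>2 * r / n)"
    and "J \<subseteq> {..<n}"
  shows "\<forall>W\<^sub>C S\<^sub>C V\<^sub>C k. compact_svd (submatrix L UNIV J) W\<^sub>C S\<^sub>C V\<^sub>C k \<longrightarrow>
           (\<forall>i<card J. vnorm2 (row V\<^sub>C i) \<le>
              kappa L * (opnorm2 (pinv (submatrix L UNIV J)) / opnorm2 (pinv L)) * sqrt (\<mu>\<^sub>2 * r / n))"
proof (intro allI impI)
  fix W\<^sub>C S\<^sub>C V\<^sub>C k i
  assume svd_C: "compact_svd (submatrix L UNIV J) W\<^sub>C S\<^sub>C V\<^sub>C k" and i: "i < card J"
  define C j s where "C = submatrix L UNIV J" and "j = pick J i" and "s = sqrt (\<mu>\<^sub>2 * r / n)"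
  have cols: "{j. j < dim_col L \<and> j \<in> J} = J"
    using assms(1,6) by auto
  have bound: "vnorm2 (row V\<^sub>C i) \<le> opnorm2 (pinv C) * opnorm2 L * vnorm2 (row V\<^sub>L j)"
    using vnorm2_row_submatrix_le[OF assms(3) svd_C] i cols by (simp add: C_def j_def)
  have row_V_L: "vnorm2 (row V\<^sub>L j) \<le> s"
    using assms(1,5) pick_le[of i n J] i cols by (simp add: j_def s_def)
  show "vnorm2 (row V\<^sub>C i) \<le> kappa L * (opnorm2 (pinv C) / opnorm2 (pinv L)) * s"
  proof (cases "r = 0")
    case True
    (* The right-hand side may degenerate to 0 here (x / 0 = 0), but the rows of V\<^sub>L are empty. *)
    have "dim_col V\<^sub>L = 0"
      using assms(3) True unfolding compact_svd_def by blast
    then have "vnorm2 (row V\<^sub>C i) \<le> 0"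
      using bound by (simp add: vnorm2_def)
    also have "0 \<le> kappa L * (opnorm2 (pinv C) / opnorm2 (pinv L)) * s"
      using row_V_L vnorm2_nonneg[of "row V\<^sub>L j"]
      by (intro mult_nonneg_nonneg divide_nonneg_nonneg) (simp_all add: kappa_def opnorm2_nonneg)
    finally show ?thesis .
  next
    case False
    then have "kappa L * (opnorm2 (pinv C) / opnorm2 (pinv L)) = opnorm2 (pinv C) * opnorm2 L"
      using opnorm2_pinv_pos[OF assms(3)] by (simp add: kappa_def)
    moreover have
      "opnorm2 (pinv C) * opnorm2 L * vnorm2 (row V\<^sub>L j) \<le> opnorm2 (pinv C) * opnorm2 L * s"
      using row_V_L by (intro mult_left_mono mult_nonneg_nonneg opnorm2_nonneg)
    ultimately show ?thesis
      using bound by simp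
  qed
qed

end
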